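(* Consider the problem of minimizing $f(x)+h(x)$ subject to $Ax=b$, with $A\in\mathbb R^{m\times n}$, $A\neq0$, $b\in\mathbb R^m$, and the setting below. Run the following Bregman dual Condat--V\~u algorithm with line search: choose $x^{(0)}\in\operatorname{int}(\operatorname{dom}\phi_{\mathrm p})\cap\operatorname{dom}h$, $z^{(-1)}=z^{(0)}\in\mathbb R^m$, $\tau_{-1},\sigma_{-1}>0$ and $\delta\in(0,1]$, and set $\beta=\sigma_{-1}/\tau_{-1}$. At iteration $k\ge0$, choose $\bar\theta_k\ge1$; for $i=0,1,2,\dots$ set $\theta_k=2^{-i}\bar\theta_k$, $\tau_k=\theta_k\tau_{k-1}$, $\sigma_k=\theta_k\sigma_{k-1}$, and compute \[\bar z^{(k+1)}=z^{(k)}+\theta_k(z^{(k)}-z^{(k-1)}),\quad x^{(k+1)}=\mathrm{prox}^{\phi_{\mathrm p}}_{\tau_kf}\big(x^{(k)},\tau_k(A^T\bar z^{(k+1)}+\nabla h(x^{(k)}))\big),\quad z^{(k+1)}=z^{(k)}+\sigma_k(Ax^{(k+1)}-b);\] accept these iterates and parameters (and stop the inner loop) as soon as \[\langle z^{(k+1)}-\bar z^{(k+1)},A(x^{(k+1)}-x^{(k)})\rangle+h(x^{(k+1)})-h(x^{(k)})-\langle\nabla h(x^{(k)}),x^{(k+1)}-x^{(k)}\rangle\le\frac{\delta^2}{\tau_k}d_{\mathrm p}(x^{(k+1)},x^{(k)})+\frac1{2\sigma_k}\|\bar z^{(k+1)}-z^{(k+1)}\|^2 .\] Then at every iteration the backtracking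 terminates, and the accepted stepsizes satisfy, for all $k\ge0$, \[\tau_k\ge\tau_{\min}:=\min\Big\{\tau_{-1},\ \frac{-L+\sqrt{L^2+4\delta^2\beta\|A\|^2}}{4\beta\|A\|^2}\Big\},\qquad\sigma_k\ge\sigma_{\min}:=\beta\tau_{\min}.\]
   Context: $f:\mathbb R^n\to\mathbb R\cup\{+\infty\}$ and $h$ are closed convex, $h$ differentiable on its open convex domain, $f+h$ proper. A Bregman kernel $\phi_{\mathrm p}$ on $\mathbb R^n$ is convex with $\operatorname{int}(\operatorname{dom}\phi_{\mathrm p})\ne\emptyset$, continuous on its domain, continuously differentiable on the interior; $d_{\mathrm p}(x,y)=\phi_{\mathrm p}(x)-\phi_{\mathrm p}(y)-\langle\nabla\phi_{\mathrm p}(y),x-y\rangle$ on $\operatorname{dom}\phi_{\mathrm p}\times\operatorname{int}(\operatorname{dom}\phi_{\mathrm p})$, with $d_{\mathrm p}(x,x')\ge\frac12\|x-x'\|_{\mathrm p}^2$ for a norm $\|\cdot\|_{\mathrm p}$. $\mathrm{prox}^{\phi_{\mathrm p}}_F(y,a)=\operatorname{argmin}_x\big(F(x)+\langle a,x\rangle+d_{\mathrm p}(x,y)\big)$, assumed to be a unique point of $\operatorname{int}(\operatorname{dom}\phi_{\mathrm p})$ for all $a$ and $y\in\operatorname{int}(\operatorname{dom}\phi_{\mathrm p})$. Also $\operatorname{dom}\phi_{\mathrm p}\subseteq\operatorname{dom}h$ and $h(x)-h(x')-\langle\nabla h(x'),x-x'\rangle\le L\,d_{\mathrm p}(x,x')$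 for all $(x,x')\in\operatorname{dom}d_{\mathrm p}$, for some $L>0$. $\|\cdot\|$ is the Euclidean norm and $\|A\|=\sup_{u\ne0}\|Au\|/\|u\|_{\mathrm p}$. *)

theory Defs
  imports "HOL-Analysis.Analysis"
begin

definition econvex :: "('a::real_vector \<Rightarrow> ereal) \<Rightarrow> bool" where
  "econvex g \<longleftrightarrow> convex {(x, t::real). g x \<le> ereal t}"

definition eclosed :: "('a::real_normed_vector \<Rightarrow> ereal) \<Rightarrow> bool" where
  "eclosed g \<longleftrightarrow> closed {(x, t::real). g x \<le> ereal t}"

definition edom :: "('a \<Rightarrow> ereal) \<Rightarrow> 'a set" where
  "edom g = {x. g x < \<infinity>}"

definition is_norm :: "('a::real_vector \<Rightarrow> real) \<Rightarrow> bool" where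
  "is_norm np \<longleftrightarrow> (\<forall>x. np x = 0 \<longleftrightarrow> x = 0) \<and> (\<forall>c x. np (c *\<^sub>R x) = \<bar>c\<bar> * np x)
     \<and> (\<forall>x y. np (x + y) \<le> np x + np y)"

definition opnorm_p :: "(real^'n \<Rightarrow> real) \<Rightarrow> real^'n^'m \<Rightarrow> real" where
  "opnorm_p np A = (SUP u\<in>{u. u \<noteq> 0}. norm (A *v u) / np u)"

definition bdist :: "(real^'n \<Rightarrow> real) \<Rightarrow> (real^'n \<Rightarrow> real^'n) \<Rightarrow> real^'n \<Rightarrow> real^'n \<Rightarrow> real" where
  "bdist \<phi> g\<phi> x y = \<phi> x - \<phi> y - g\<phi> y \<bullet> (x - y)"

text \<open>Minimizers of F(x) + <a,x> + d_p(x,y); d_p is +infinity outside dom phi = Dp.\<close>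

definition is_bprox_min :: "(real^'n) set \<Rightarrow> (real^'n \<Rightarrow> real) \<Rightarrow> (real^'n \<Rightarrow> real^'n)
    \<Rightarrow> (real^'n \<Rightarrow> ereal) \<Rightarrow> real^'n \<Rightarrow> real^'n \<Rightarrow> real^'n \<Rightarrow> bool" where
  "is_bprox_min Dp \<phi> g\<phi> F y a x \<longleftrightarrow> x \<in> Dp \<and>
     (\<forall>x'\<in>Dp. F x + ereal (a \<bullet> x + bdist \<phi> g\<phi> x y) \<le> F x' + ereal (a \<bullet> x' + bdist \<phi> g\<phi> x' y))"

definition bprox :: "(real^'n) set \<Rightarrow> (real^'n \<Rightarrow> real) \<Rightarrow> (real^'n \<Rightarrow> real^'n)
    \<Rightarrow> (real^'n \<Rightarrow> ereal) \<Rightarrow> real^'n \<Rightarrow> real^'n \<Rightarrow> real^'n" where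
  "bprox Dp \<phi> g\<phi> F y a = (THE x. is_bprox_min Dp \<phi> g\<phi> F y a x)"

text \<open>Algorithm state at the start of iteration k:
  (x^(k), z^(k), z^(k-1), tau_(k-1), sigma_(k-1)).\<close>

type_synonym ('n, 'm) bdcv_state = "(real^'n) \<times> (real^'m) \<times> (real^'m) \<times> real \<times> real"

definition bdcv_zbar :: "('n, 'm) bdcv_state \<Rightarrow> real \<Rightarrow> real^'m" where
  "bdcv_zbar s \<theta> = (case s of (x, z, zp, \<tau>p, \<sigma>p) \<Rightarrow> z + \<theta> *\<^sub>R (z - zp))"

definition bdcv_next :: "(real^'n) set \<Rightarrow> (real^'n \<Rightarrow> real) \<Rightarrow> (real^'n \<Rightarrow> real^'n)
    \<Rightarrow> (real^'n \<Rightarrow> ereal) \<Rightarrow> (real^'n \<Rightarrow> real^'n) \<Rightarrow> real^'n^'m \<Rightarrow> real^'m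
    \<Rightarrow> ('n, 'm) bdcv_state \<Rightarrow> real \<Rightarrow> ('n, 'm) bdcv_state" where
  "bdcv_next Dp \<phi> g\<phi> f gh A b s \<theta> = (case s of (x, z, zp, \<tau>p, \<sigma>p) \<Rightarrow>
     let \<tau> = \<theta> * \<tau>p; \<sigma> = \<theta> * \<sigma>p; zb = bdcv_zbar s \<theta>;
         xn = bprox Dp \<phi> g\<phi> (\<lambda>u. ereal \<tau> * f u) x (\<tau> *\<^sub>R (transpose A *v zb + gh x));
         zn = z + \<sigma> *\<^sub>R (A *v xn - b)
     in (xn, zn, z, \<tau>, \<sigma>))"

definition bdcv_accept :: "(real^'n) set \<Rightarrow> (real^'n \<Rightarrow> real) \<Rightarrow> (real^'n \<Rightarrow> real^'n)
    \<Rightarrow> (real^'n \<Rightarrow> ereal) \<Rightarrow> (real^'n \<Rightarrow> ereal) \<Rightarrow> (real^'n \<Rightarrow> real^'n) \<Rightarrow> real^'n^'m \<Rightarrow> real^'m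
    \<Rightarrow> real \<Rightarrow> ('n, 'm) bdcv_state \<Rightarrow> real \<Rightarrow> bool" where
  "bdcv_accept Dp \<phi> g\<phi> f h gh A b \<delta> s \<theta> = (case s of (x, z, zp, \<tau>p, \<sigma>p) \<Rightarrow>
     (case bdcv_next Dp \<phi> g\<phi> f gh A b s \<theta> of (xn, zn, _, \<tau>, \<sigma>) \<Rightarrow>
       let zb = bdcv_zbar s \<theta> in
       (zn - zb) \<bullet> (A *v (xn - x)) + real_of_ereal (h xn) - real_of_ereal (h x) - gh x \<bullet> (xn - x)
         \<le> \<delta>\<^sup>2 / \<tau> * bdist \<phi> g\<phi> xn x + 1 / (2 * \<sigma>) * (norm (zb - zn))\<^sup>2))"

fun bdcv_run :: "(real^'n) set \<Rightarrow> (real^'n \<Rightarrow> real) \<Rightarrow> (real^'n \<Rightarrow> real^'n)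
    \<Rightarrow> (real^'n \<Rightarrow> ereal) \<Rightarrow> (real^'n \<Rightarrow> ereal) \<Rightarrow> (real^'n \<Rightarrow> real^'n) \<Rightarrow> real^'n^'m \<Rightarrow> real^'m
    \<Rightarrow> real \<Rightarrow> real^'n \<Rightarrow> real^'m \<Rightarrow> real \<Rightarrow> real \<Rightarrow> (nat \<Rightarrow> real) \<Rightarrow> nat \<Rightarrow> ('n, 'm) bdcv_state" where
  "bdcv_run Dp \<phi> g\<phi> f h gh A b \<delta> x0 z0 \<tau>m1 \<sigma>m1 \<theta>bar 0 = (x0, z0, z0, \<tau>m1, \<sigma>m1)"
| "bdcv_run Dp \<phi> g\<phi> f h gh A b \<delta> x0 z0 \<tau>m1 \<sigma>m1 \<theta>bar (Suc k) =
     (let s = bdcv_run Dp \<phi> g\<phi> f h gh A b \<delta> x0 z0 \<tau>m1 \<sigma>m1 \<theta>bar k;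
          i = (LEAST i. bdcv_accept Dp \<phi> g\<phi> f h gh A b \<delta> s (\<theta>bar k / 2 ^ i))
      in bdcv_next Dp \<phi> g\<phi> f gh A b s (\<theta>bar k / 2 ^ i))"

end

theory Submission
  imports Defs
begin

text \<open>If the trial primal step \<open>\<tau>\<close> satisfies \<open>\<beta>\<parallel>A\<parallel>\<^sup>2\<tau>\<^sup>2 + L\<tau> \<le> \<delta>\<^sup>2\<close>, the acceptance test holds
  automatically: by Cauchy--Schwarz and the definition of \<open>\<parallel>A\<parallel>\<close> the coupling term is at most
  \<open>\<parallel>z\<^sup>+ - z\<^sub>e\<parallel> \<parallel>A\<parallel> \<parallel>x\<^sup>+ - x\<parallel>\<^sub>p\<close>, where \<open>z\<^sub>e\<close> is the extrapolated dual point; Young's inequality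
  with weight \<open>\<sigma> = \<beta>\<tau>\<close> splits this into \<open>\<parallel>z\<^sub>e - z\<^sup>+\<parallel>\<^sup>2/(2\<sigma>)\<close> plus \<open>\<sigma>\<parallel>A\<parallel>\<^sup>2\<parallel>x\<^sup>+ - x\<parallel>\<^sub>p\<^sup>2/2 \<le> \<sigma>\<parallel>A\<parallel>\<^sup>2 d\<^sub>p(x\<^sup>+,x)\<close> (strong convexity of the
  kernel), and the \<open>h\<close>-terms are at most \<open>L d\<^sub>p(x\<^sup>+,x)\<close> (relative smoothness). This condition holds
  for every \<open>\<tau>\<close> below the positive root \<open>t\<^sup>*\<close> of \<open>\<beta>\<parallel>A\<parallel>\<^sup>2t\<^sup>2 + Lt = \<delta>\<^sup>2\<close>. Hence halving the trial step
  stops, and either no halving occurred (\<open>\<tau>\<^sub>k \<ge> \<tau>\<^sub>k\<^sub>-\<^sub>1\<close>) or the last rejected trial exceeded \<open>t\<^sup>*\<close>,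
  so that \<open>\<tau>\<^sub>k > t\<^sup>*/2\<close>. As \<open>\<sigma>\<^sub>k/\<tau>\<^sub>k = \<beta>\<close> throughout, induction gives \<open>\<tau>\<^sub>k \<ge> min \<tau>\<^sub>-\<^sub>1 (t\<^sup>*/2)\<close>.\<close>

lemma is_norm_zero: "is_norm np \<Longrightarrow> np 0 = 0"
  unfolding is_norm_def by blast

lemma is_norm_scaleR: "is_norm np \<Longrightarrow> np (c *\<^sub>R x) = \<bar>c\<bar> * np x"
  unfolding is_norm_def by blast

lemma is_norm_triangle: "is_norm np \<Longrightarrow> np (x + y) \<le> np x + np y"
  unfolding is_norm_def by blast

lemma is_norm_minus_commute: "is_norm np \<Longrightarrow> np (x - y) = np (y - x)"
  using is_norm_scaleR[of np "-1" "x - y"] by simp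

lemma is_norm_nonneg: "is_norm np \<Longrightarrow> np x \<ge> 0"
  using is_norm_triangle[of np x "-x"] is_norm_minus_commute[of np 0 x] is_norm_zero[of np]
  by simp

lemma is_norm_pos: "is_norm np \<Longrightarrow> x \<noteq> 0 \<Longrightarrow> np x > 0"
  using is_norm_nonneg[of np x] unfolding is_norm_def by (metis less_eq_real_def)

lemma is_norm_sum:
  assumes "is_norm np"
  shows "np (sum g S) \<le> (\<Sum>i\<in>S. np (g i))"
proof (induction S rule: infinite_finite_induct)
  case (insert a F)
  then show ?case using is_norm_triangle[OF assms, of "g a" "sum g F"] by simp
qed (simp_all add: is_norm_zero[OF assms])

lemma is_norm_le_sum_Basis:
  fixes np :: "'a::euclidean_space \<Rightarrow> real"
  assumes "is_norm np"
  shows "np x \<le> (\<Sum>b\<in>Basis. np b) * norm x"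
proof -
  have "np x = np (\<Sum>b\<in>Basis. (x \<bullet> b) *\<^sub>R b)" by (simp add: euclidean_representation)
  also have "\<dots> \<le> (\<Sum>b\<in>Basis. np ((x \<bullet> b) *\<^sub>R b))" by (rule is_norm_sum[OF assms])
  also have "\<dots> = (\<Sum>b\<in>Basis. \<bar>x \<bullet> b\<bar> * np b)" by (simp add: is_norm_scaleR[OF assms])
  also have "\<dots> \<le> (\<Sum>b\<in>Basis. norm x * np b)"
    by (intro sum_mono mult_right_mono Basis_le_norm is_norm_nonneg[OF assms])
  finally show ?thesis by (simp add: sum_distrib_left mult.commute)
qed

lemma is_norm_lipschitz:
  fixes np :: "'a::euclidean_space \<Rightarrow> real"
  assumes "is_norm np"
  shows "(\<Sum>b\<in>Basis. np b)-lipschitz_on S np"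
proof (rule lipschitz_onI)
  fix x y
  have "np x \<le> np (x - y) + np y" "np y \<le> np (x - y) + np x"
    using is_norm_triangle[OF assms, of "x - y" y] is_norm_triangle[OF assms, of "y - x" x]
      is_norm_minus_commute[OF assms, of x y] by simp_all
  moreover have "np (x - y) \<le> (\<Sum>b\<in>Basis. np b) * norm (x - y)"
    by (rule is_norm_le_sum_Basis[OF assms])
  ultimately show "dist (np x) (np y) \<le> (\<Sum>b\<in>Basis. np b) * dist x y"
    by (simp add: dist_real_def dist_norm)
qed (intro sum_nonneg is_norm_nonneg[OF assms])

text \<open>Equivalence with the Euclidean norm: \<open>np\<close> attains a positive minimum on the unit sphere.\<close>

lemma is_norm_ge_norm:
  fixes np :: "'a::euclidean_space \<Rightarrow> real"
  assumes "is_norm np"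
  obtains c where "c > 0" "\<And>x. c * norm x \<le> np x"
proof -
  obtain e :: 'a where "e \<in> Basis" using nonempty_Basis by blast
  then have "sphere (0::'a) 1 \<noteq> {}" by (metis mem_sphere_0 norm_Basis empty_iff)
  then obtain u where u: "u \<in> sphere 0 1" and u_min: "\<And>y. y \<in> sphere 0 1 \<Longrightarrow> np u \<le> np y"
    using continuous_attains_inf[OF compact_sphere _ lipschitz_on_continuous_on]
      is_norm_lipschitz[OF assms] by metis
  have "np u > 0" using u by (intro is_norm_pos[OF assms]) auto
  moreover have "np u * norm x \<le> np x" for x
  proof (cases "x = 0")
    case False
    then have "np u \<le> np ((1 / norm x) *\<^sub>R x)" by (intro u_min) simp
    then show ?thesis using False by (simp add: is_norm_scaleR[OF assms] field_simps)
  qed (simp add: is_norm_zero[OF assms])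
  ultimately show ?thesis by (rule that)
qed

lemma opnorm_p_ge_quotient:
  fixes A :: "real^'n^'m"
  assumes "is_norm np" "u \<noteq> 0"
  shows "norm (A *v u) / np u \<le> opnorm_p np A"
proof -
  obtain c where c: "c > 0" "\<And>x. c * norm x \<le> np x" using is_norm_ge_norm[OF assms(1)] by blast
  obtain K where K: "\<And>x. norm (A *v x) \<le> norm x * K" "K > 0"
    using bounded_linear.pos_bounded[OF matrix_vector_mul_bounded_linear[of A]] by blast
  have "bdd_above ((\<lambda>u. norm (A *v u) / np u) ` {u. u \<noteq> 0})"
  proof (rule bdd_aboveI2)
    fix v :: "real^'n" assume "v \<in> {u. u \<noteq> 0}"
    then have "np v > 0" using is_norm_pos[OF assms(1)] by auto
    have "norm (A *v v) \<le> norm v * K" by (rule K(1))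
    also have "\<dots> \<le> np v / c * K"
      using c K(2) by (intro mult_right_mono) (simp_all add: field_simps mult.commute)
    finally show "norm (A *v v) / np v \<le> K / c" using \<open>np v > 0\<close> c by (simp add: field_simps)
  qed
  then show ?thesis unfolding opnorm_p_def using assms(2) by (intro cSUP_upper) simp_all
qed

lemma opnorm_p_bound:
  fixes A :: "real^'n^'m"
  assumes "is_norm np"
  shows "norm (A *v u) \<le> opnorm_p np A * np u"
proof (cases "u = 0")
  case False
  then show ?thesis
    using opnorm_p_ge_quotient[OF assms False, of A] is_norm_pos[OF assms False]
    by (simp add: field_simps)
qed (simp add: is_norm_zero[OF assms])

lemma opnorm_p_pos:
  fixes A :: "real^'n^'m"
  assumes "is_norm np" "A \<noteq> 0"
  shows "opnorm_p np A > 0"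
proof -
  obtain u where "A *v u \<noteq> A *v 0" using assms(2) matrix_eq[of A 0] by auto
  then have "A *v u \<noteq> 0" "u \<noteq> 0" by auto
  then have "0 < norm (A *v u) / np u" using is_norm_pos[OF assms(1)] by simp
  also have "\<dots> \<le> opnorm_p np A" by (rule opnorm_p_ge_quotient[OF assms(1) \<open>u \<noteq> 0\<close>])
  finally show ?thesis .
qed

lemma positive_root_pos:
  fixes a L \<delta> :: real
  assumes "a > 0" "\<delta> \<noteq> 0"
  shows "(- L + sqrt (L\<^sup>2 + 4 * \<delta>\<^sup>2 * a)) / (2 * a) > 0"
proof -
  have "L < sqrt (L\<^sup>2 + 4 * \<delta>\<^sup>2 * a)" using assms by (intro real_less_rsqrt) simp
  then show ?thesis using assms by simp
qed

lemma quadratic_le_below_positive_root: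
  fixes a L \<delta> t :: real
  assumes "a > 0" "L \<ge> 0" "t \<ge> 0" "t \<le> (- L + sqrt (L\<^sup>2 + 4 * \<delta>\<^sup>2 * a)) / (2 * a)"
  shows "a * t\<^sup>2 + L * t \<le> \<delta>\<^sup>2"
proof -
  have "2 * a * t + L \<le> sqrt (L\<^sup>2 + 4 * \<delta>\<^sup>2 * a)" using assms(1,4) by (simp add: field_simps)
  then have "(2 * a * t + L)\<^sup>2 \<le> (sqrt (L\<^sup>2 + 4 * \<delta>\<^sup>2 * a))\<^sup>2"
    using assms by (intro power_mono) simp_all
  also have "\<dots> = L\<^sup>2 + 4 * \<delta>\<^sup>2 * a" using assms(1) by simp
  finally have "4 * a * (a * t\<^sup>2 + L * t) \<le> 4 * a * \<delta>\<^sup>2" by (simp add: power2_eq_square algebra_simps)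
  then show ?thesis using assms(1) by simp
qed

text \<open>The estimate behind the acceptance test, with \<open>w = \<parallel>z\<^sup>+ - z\<^sub>e\<parallel>\<close>, \<open>u = \<parallel>x\<^sup>+ - x\<parallel>\<^sub>p\<close>,
  \<open>d = d\<^sub>p(x\<^sup>+,x)\<close>; Young's inequality gives \<open>w nA u \<le> w\<^sup>2/(2\<sigma>) + \<sigma> nA\<^sup>2 u\<^sup>2/2\<close>.\<close>

lemma young_acceptance_bound:
  fixes p H d w u nA \<tau> \<sigma> \<delta> L :: real
  assumes "p \<le> w * nA * u" "H \<le> L * d" "u\<^sup>2 \<le> 2 * d" "\<sigma> > 0" "\<sigma> * nA\<^sup>2 + L \<le> \<delta>\<^sup>2 / \<tau>"
  shows "p + H \<le> \<delta>\<^sup>2 / \<tau> * d + 1 / (2 * \<sigma>) * w\<^sup>2"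
proof -
  have "0 \<le> (w - \<sigma> * (nA * u))\<^sup>2" by simp
  then have "w * nA * u \<le> w\<^sup>2 / (2 * \<sigma>) + \<sigma> * nA\<^sup>2 * u\<^sup>2 / 2"
    using assms(4) by (simp add: field_simps power2_eq_square)
  also have "\<sigma> * nA\<^sup>2 * u\<^sup>2 / 2 \<le> \<sigma> * nA\<^sup>2 * d" using assms(3,4) by (simp add: mult_left_mono)
  finally have "p \<le> w\<^sup>2 / (2 * \<sigma>) + \<sigma> * nA\<^sup>2 * d" using assms(1) by linarith
  moreover have "(\<sigma> * nA\<^sup>2 + L) * d \<le> \<delta>\<^sup>2 / \<tau> * d"
    using assms(5) order_trans[OF zero_le_power2 assms(3)] by (intro mult_right_mono) simp_all
  ultimately show ?thesis using assms(2) by (simp add: algebra_simps)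
qed

lemma halving_search:
  fixes \<theta> \<tau> t :: real
  assumes "\<theta> \<ge> 1" "\<tau> > 0" "t > 0" and accept_small: "\<And>i. \<theta> / 2 ^ i * \<tau> \<le> t \<Longrightarrow> P i"
  shows "\<exists>i. P i" and "min \<tau> (t / 2) \<le> \<theta> / 2 ^ (LEAST i. P i) * \<tau>"
proof -
  obtain n :: nat where "\<theta> * \<tau> / t < 2 ^ n" using real_arch_pow[of 2] by auto
  then have "\<theta> / 2 ^ n * \<tau> \<le> t" using assms(3) by (simp add: field_simps)
  then show "\<exists>i. P i" using accept_small by blast
  show "min \<tau> (t / 2) \<le> \<theta> / 2 ^ (LEAST i. P i) * \<tau>"
  proof (cases "LEAST i. P i")
    case 0
    then show ?thesis using assms(1,2) by (simp add: min_le_iff_disj)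
  next
    case (Suc j)
    then have "\<not> P j" using not_less_Least[of j P] by simp
    then have "t < \<theta> / 2 ^ j * \<tau>" using accept_small by force
    then have "t / 2 \<le> \<theta> / 2 ^ Suc j * \<tau>" by simp
    then show ?thesis using Suc by (simp add: min_le_iff_disj)
  qed
qed

locale bregman_condat_vu =
  fixes Dp :: "(real^'n) set" and \<phi> :: "real^'n \<Rightarrow> real" and g\<phi> :: "real^'n \<Rightarrow> real^'n"
    and f h :: "real^'n \<Rightarrow> ereal" and gh :: "real^'n \<Rightarrow> real^'n" and np :: "real^'n \<Rightarrow> real"
    and A :: "real^'n^'m" and b :: "real^'m" and L \<delta> :: real
  assumes np_norm: "is_norm np"
    and strong: "\<forall>x\<in>Dp. \<forall>x'\<in>interior Dp. bdist \<phi> g\<phi> x x' \<ge> 1/2 * (np (x - x'))\<^sup>2"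
    and prox_ok: "\<forall>\<tau>>0. \<forall>y\<in>interior Dp. \<forall>a. \<exists>x\<in>interior Dp.
        is_bprox_min Dp \<phi> g\<phi> (\<lambda>u. ereal \<tau> * f u) y a x \<and>
        (\<forall>x'. is_bprox_min Dp \<phi> g\<phi> (\<lambda>u. ereal \<tau> * f u) y a x' \<longrightarrow> x' = x)"
    and L_nonneg: "L \<ge> 0"
    and L_smooth: "\<forall>x\<in>Dp. \<forall>x'\<in>interior Dp.
        real_of_ereal (h x) - real_of_ereal (h x') - gh x' \<bullet> (x - x') \<le> L * bdist \<phi> g\<phi> x x'"
    and A_nz: "A \<noteq> 0"
    and \<delta>_nz: "\<delta> \<noteq> 0"
begin

abbreviation nA :: real where "nA \<equiv> opnorm_p np A"

text \<open>The positive root \<open>t\<^sup>*\<close> of \<open>\<beta>\<parallel>A\<parallel>\<^sup>2t\<^sup>2 + Lt = \<delta>\<^sup>2\<close>.\<close>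

definition step_bound :: "real \<Rightarrow> real" where
  "step_bound \<beta> = (- L + sqrt (L\<^sup>2 + 4 * \<delta>\<^sup>2 * (\<beta> * nA\<^sup>2))) / (2 * (\<beta> * nA\<^sup>2))"

lemma step_bound_pos: "\<beta> > 0 \<Longrightarrow> step_bound \<beta> > 0"
  unfolding step_bound_def
  using positive_root_pos opnorm_p_pos[OF np_norm A_nz] \<delta>_nz by simp

lemma quadratic_le_if_le_step_bound:
  assumes "\<beta> > 0" "\<tau> \<ge> 0" "\<tau> \<le> step_bound \<beta>"
  shows "\<beta> * nA\<^sup>2 * \<tau>\<^sup>2 + L * \<tau> \<le> \<delta>\<^sup>2"
  using quadratic_le_below_positive_root[of "\<beta> * nA\<^sup>2" L \<tau> \<delta>] assms L_nonneg
    opnorm_p_pos[OF np_norm A_nz]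
  unfolding step_bound_def by simp

lemma bdcv_next_eq:
  assumes "x \<in> interior Dp" "\<tau>p > 0" "\<theta> > 0"
  obtains xn where "xn \<in> interior Dp"
    "bdcv_next Dp \<phi> g\<phi> f gh A b (x, z, zp, \<tau>p, \<sigma>p) \<theta>
      = (xn, z + (\<theta> * \<sigma>p) *\<^sub>R (A *v xn - b), z, \<theta> * \<tau>p, \<theta> * \<sigma>p)"
proof -
  let ?F = "\<lambda>u. ereal (\<theta> * \<tau>p) * f u"
  let ?a = "(\<theta> * \<tau>p) *\<^sub>R (transpose A *v bdcv_zbar (x, z, zp, \<tau>p, \<sigma>p) \<theta> + gh x)"
  have "\<theta> * \<tau>p > 0" using assms(2,3) by simp
  from prox_ok[rule_format, OF this assms(1), of ?a]
  obtain xn where xn: "xn \<in> interior Dp" "is_bprox_min Dp \<phi> g\<phi> ?F x ?a xn"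
    and unique: "\<And>x'. is_bprox_min Dp \<phi> g\<phi> ?F x ?a x' \<Longrightarrow> x' = xn"
    by blast
  have "bprox Dp \<phi> g\<phi> ?F x ?a = xn"
    unfolding bprox_def using xn(2) unique by (rule the_equality)
  then show ?thesis using that xn(1) unfolding bdcv_next_def Let_def by auto
qed

lemma bdcv_accept_if_le_step_bound:
  assumes x: "x \<in> interior Dp" and "\<tau>p > 0" "\<theta> > 0" "\<beta> > 0" "\<theta> * \<tau>p \<le> step_bound \<beta>"
  shows "bdcv_accept Dp \<phi> g\<phi> f h gh A b \<delta> (x, z, zp, \<tau>p, \<beta> * \<tau>p) \<theta>"
proof -
  define \<tau> where "\<tau> = \<theta> * \<tau>p"
  have \<tau>: "\<tau> > 0" "\<tau> \<le> step_bound \<beta>" using assms unfolding \<tau>_def by simp_all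
  obtain xn where xn: "xn \<in> interior Dp" and next_eq:
    "bdcv_next Dp \<phi> g\<phi> f gh A b (x, z, zp, \<tau>p, \<beta> * \<tau>p) \<theta>
      = (xn, z + (\<beta> * \<tau>) *\<^sub>R (A *v xn - b), z, \<tau>, \<beta> * \<tau>)"
    unfolding \<tau>_def
    by (rule bdcv_next_eq[OF assms(1-3), where z=z and zp=zp and \<sigma>p="\<beta> * \<tau>p"])
      (simp_all add: mult.left_commute)
  define zb where "zb = bdcv_zbar (x, z, zp, \<tau>p, \<beta> * \<tau>p) \<theta>"
  define zn where "zn = z + (\<beta> * \<tau>) *\<^sub>R (A *v xn - b)"
  have xn_Dp: "xn \<in> Dp" using xn interior_subset by blast
  have "(zn - zb) \<bullet> (A *v (xn - x)) \<le> norm (zn - zb) * norm (A *v (xn - x))"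
    by (rule norm_cauchy_schwarz)
  also have "\<dots> \<le> norm (zn - zb) * (nA * np (xn - x))"
    by (intro mult_left_mono opnorm_p_bound[OF np_norm]) simp
  finally have coupling: "(zn - zb) \<bullet> (A *v (xn - x)) \<le> norm (zn - zb) * nA * np (xn - x)"
    by simp
  have smooth: "real_of_ereal (h xn) - real_of_ereal (h x) - gh x \<bullet> (xn - x) \<le> L * bdist \<phi> g\<phi> xn x"
    using L_smooth xn_Dp x by blast
  have strong_xn: "(np (xn - x))\<^sup>2 \<le> 2 * bdist \<phi> g\<phi> xn x" using strong xn_Dp x by fastforce
  have "\<beta> * nA\<^sup>2 * \<tau>\<^sup>2 + L * \<tau> \<le> \<delta>\<^sup>2"
    using quadratic_le_if_le_step_bound[OF assms(4)] \<tau> by simp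
  then have "\<beta> * \<tau> * nA\<^sup>2 + L \<le> \<delta>\<^sup>2 / \<tau>" using \<tau>(1) by (simp add: field_simps power2_eq_square)
  with coupling smooth strong_xn have "(zn - zb) \<bullet> (A *v (xn - x))
      + (real_of_ereal (h xn) - real_of_ereal (h x) - gh x \<bullet> (xn - x))
      \<le> \<delta>\<^sup>2 / \<tau> * bdist \<phi> g\<phi> xn x + 1 / (2 * (\<beta> * \<tau>)) * (norm (zn - zb))\<^sup>2"
    using assms(4) \<tau>(1) by (intro young_acceptance_bound) simp_all
  then show ?thesis
    unfolding bdcv_accept_def next_eq zn_def[symmetric] zb_def[symmetric] Let_def prod.case
    by (simp add: norm_minus_commute)
qed

lemma bdcv_line_search:
  fixes z zp :: "real^'m"
  assumes "x \<in> interior Dp" "\<tau>p > 0" "\<theta>b \<ge> 1" "\<beta> > 0"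
  defines "s \<equiv> (x, z, zp, \<tau>p, \<beta> * \<tau>p)"
  shows "\<exists>i. bdcv_accept Dp \<phi> g\<phi> f h gh A b \<delta> s (\<theta>b / 2 ^ i)"
    and "\<exists>xn zn \<tau>. bdcv_next Dp \<phi> g\<phi> f gh A b s
          (\<theta>b / 2 ^ (LEAST i. bdcv_accept Dp \<phi> g\<phi> f h gh A b \<delta> s (\<theta>b / 2 ^ i)))
        = (xn, zn, z, \<tau>, \<beta> * \<tau>) \<and> xn \<in> interior Dp \<and> min \<tau>p (step_bound \<beta> / 2) \<le> \<tau>"
proof -
  let ?P = "\<lambda>i. bdcv_accept Dp \<phi> g\<phi> f h gh A b \<delta> s (\<theta>b / 2 ^ i)"
  have small: "?P i" if "\<theta>b / 2 ^ i * \<tau>p \<le> step_bound \<beta>" for i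
    unfolding s_def using that assms by (intro bdcv_accept_if_le_step_bound) simp_all
  note search = halving_search[OF assms(3,2) step_bound_pos[OF assms(4)], of ?P, OF small]
  show "\<exists>i. ?P i" by (rule search(1))
  define \<theta> where "\<theta> = \<theta>b / 2 ^ (LEAST i. ?P i)"
  have "\<theta> > 0" unfolding \<theta>_def using assms(3) by simp
  then obtain xn where "xn \<in> interior Dp"
    "bdcv_next Dp \<phi> g\<phi> f gh A b s \<theta>
      = (xn, z + (\<theta> * (\<beta> * \<tau>p)) *\<^sub>R (A *v xn - b), z, \<theta> * \<tau>p, \<beta> * (\<theta> * \<tau>p))"
    unfolding s_def
    by (rule bdcv_next_eq[OF assms(1,2), where z=z and zp=zp and \<sigma>p="\<beta> * \<tau>p"])
      (simp_all add: mult.left_commute)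
  moreover have "min \<tau>p (step_bound \<beta> / 2) \<le> \<theta> * \<tau>p" using search(2) unfolding \<theta>_def .
  ultimately show "\<exists>xn zn \<tau>. bdcv_next Dp \<phi> g\<phi> f gh A b s (\<theta>b / 2 ^ (LEAST i. ?P i))
      = (xn, zn, z, \<tau>, \<beta> * \<tau>) \<and> xn \<in> interior Dp \<and> min \<tau>p (step_bound \<beta> / 2) \<le> \<tau>"
    unfolding \<theta>_def by blast
qed

lemma bdcv_run_invariant:
  assumes "x0 \<in> interior Dp" "\<tau>m1 > 0" "\<sigma>m1 > 0" "\<forall>k. \<theta>bar k \<ge> 1"
  defines "\<beta> \<equiv> \<sigma>m1 / \<tau>m1"
  shows "\<exists>x z zp \<tau>. bdcv_run Dp \<phi> g\<phi> f h gh A b \<delta> x0 z0 \<tau>m1 \<sigma>m1 \<theta>bar k = (x, z, zp, \<tau>, \<beta> * \<tau>)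
    \<and> x \<in> interior Dp \<and> min \<tau>m1 (step_bound \<beta> / 2) \<le> \<tau>"
proof (induction k)
  case 0
  have "\<sigma>m1 = \<beta> * \<tau>m1" unfolding \<beta>_def using assms(2) by simp
  then show ?case using assms(1) by auto
next
  case (Suc k)
  have \<beta>: "\<beta> > 0" unfolding \<beta>_def using assms(2,3) by simp
  then have "min \<tau>m1 (step_bound \<beta> / 2) > 0" using assms(2) step_bound_pos by simp
  with Suc obtain x z zp \<tau> where run: "bdcv_run Dp \<phi> g\<phi> f h gh A b \<delta> x0 z0 \<tau>m1 \<sigma>m1 \<theta>bar k
      = (x, z, zp, \<tau>, \<beta> * \<tau>)" and x: "x \<in> interior Dp" and \<tau>: "\<tau> > 0" "min \<tau>m1 (step_bound \<beta> / 2) \<le> \<tau>"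
    by force
  show ?case
    using bdcv_line_search(2)[OF x \<tau>(1) assms(4)[rule_format, of k] \<beta>, of z zp] \<tau>(2)
    by (force simp: run Let_def)
qed

lemma bdcv_run_step_bounds:
  fixes z0 :: "real^'m"
  assumes "x0 \<in> interior Dp" "\<tau>m1 > 0" "\<sigma>m1 > 0" "\<forall>k. \<theta>bar k \<ge> 1"
  defines "\<tau>min \<equiv> min \<tau>m1 (step_bound (\<sigma>m1 / \<tau>m1) / 2)"
    and "run \<equiv> bdcv_run Dp \<phi> g\<phi> f h gh A b \<delta> x0 z0 \<tau>m1 \<sigma>m1 \<theta>bar"
  shows "\<exists>i. bdcv_accept Dp \<phi> g\<phi> f h gh A b \<delta> (run k) (\<theta>bar k / 2 ^ i)"
    and "\<tau>min \<le> fst (snd (snd (snd (run (Suc k)))))"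
    and "\<sigma>m1 / \<tau>m1 * \<tau>min \<le> snd (snd (snd (snd (run (Suc k)))))"
proof -
  define \<beta> where "\<beta> = \<sigma>m1 / \<tau>m1"
  have \<beta>: "\<beta> > 0" unfolding \<beta>_def using assms(2,3) by simp
  have \<tau>min_pos: "\<tau>min > 0" unfolding \<tau>min_def using step_bound_pos \<beta> assms(2) \<beta>_def by simp
  have run: "\<exists>x z zp \<tau>. run j = (x, z, zp, \<tau>, \<beta> * \<tau>) \<and> x \<in> interior Dp \<and> \<tau>min \<le> \<tau>" for j
    using bdcv_run_invariant[OF assms(1-4)] unfolding \<beta>_def \<tau>min_def run_def by blast
  obtain x z zp \<tau> where "run k = (x, z, zp, \<tau>, \<beta> * \<tau>)" "x \<in> interior Dp" "\<tau>min \<le> \<tau>"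
    using run by blast
  then show "\<exists>i. bdcv_accept Dp \<phi> g\<phi> f h gh A b \<delta> (run k) (\<theta>bar k / 2 ^ i)"
    using bdcv_line_search(1)[OF _ _ _ \<beta>] assms(4) \<tau>min_pos by simp
  obtain x' z' zp' \<tau>' where "run (Suc k) = (x', z', zp', \<tau>', \<beta> * \<tau>')" "\<tau>min \<le> \<tau>'"
    using run by blast
  then show "\<tau>min \<le> fst (snd (snd (snd (run (Suc k)))))"
    and "\<sigma>m1 / \<tau>m1 * \<tau>min \<le> snd (snd (snd (snd (run (Suc k)))))"
    using mult_left_mono[of \<tau>min \<tau>' \<beta>] \<beta> unfolding \<beta>_def by simp_all
qed

end

theorem mainTheorem6:
  fixes f h :: "real^'n \<Rightarrow> ereal"
    and gh g\<phi> :: "real^'n \<Rightarrow> real^'n"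
    and \<phi> :: "real^'n \<Rightarrow> real" and Dp :: "(real^'n) set"
    and np :: "real^'n \<Rightarrow> real"
    and A :: "real^'n^'m" and b :: "real^'m"
    and L \<delta> \<tau>m1 \<sigma>m1 :: real and x0 :: "real^'n" and z0 :: "real^'m"
    and \<theta>bar :: "nat \<Rightarrow> real"
  assumes f_closed: "econvex f" "eclosed f" "\<forall>x. f x \<noteq> -\<infinity>"
    and h_closed: "econvex h" "eclosed h" "\<forall>x. h x \<noteq> -\<infinity>"
    and h_dom: "open (edom h)" "convex (edom h)"
    and h_diff: "\<forall>x\<in>edom h. ((\<lambda>y. real_of_ereal (h y)) has_derivative (\<lambda>v. gh x \<bullet> v)) (at x)"
    and proper: "\<exists>x. f x + h x < \<infinity>"
    and \<phi>_kernel: "convex Dp" "convex_on Dp \<phi>" "interior Dp \<noteq> {}" "continuous_on Dp \<phi>"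
      "\<forall>x\<in>interior Dp. (\<phi> has_derivative (\<lambda>v. g\<phi> x \<bullet> v)) (at x)"
      "continuous_on (interior Dp) g\<phi>"
    and np_norm: "is_norm np"
    and strong: "\<forall>x\<in>Dp. \<forall>x'\<in>interior Dp. bdist \<phi> g\<phi> x x' \<ge> 1/2 * (np (x - x'))\<^sup>2"
    and prox_ok: "\<forall>\<tau>>0. \<forall>y\<in>interior Dp. \<forall>a. \<exists>x\<in>interior Dp.
        is_bprox_min Dp \<phi> g\<phi> (\<lambda>u. ereal \<tau> * f u) y a x \<and>
        (\<forall>x'. is_bprox_min Dp \<phi> g\<phi> (\<lambda>u. ereal \<tau> * f u) y a x' \<longrightarrow> x' = x)"
    and dom_sub: "Dp \<subseteq> edom h"
    and L_pos: "L > 0"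
    and L_smooth: "\<forall>x\<in>Dp. \<forall>x'\<in>interior Dp.
        real_of_ereal (h x) - real_of_ereal (h x') - gh x' \<bullet> (x - x') \<le> L * bdist \<phi> g\<phi> x x'"
    and A_nz: "A \<noteq> 0"
    and x0: "x0 \<in> interior Dp \<inter> edom h"
    and steps: "\<tau>m1 > 0" "\<sigma>m1 > 0"
    and \<delta>: "0 < \<delta>" "\<delta> \<le> 1"
    and \<theta>bar: "\<forall>k. \<theta>bar k \<ge> 1"
  shows "\<forall>k. (\<exists>i. bdcv_accept Dp \<phi> g\<phi> f h gh A b \<delta>
                  (bdcv_run Dp \<phi> g\<phi> f h gh A b \<delta> x0 z0 \<tau>m1 \<sigma>m1 \<theta>bar k) (\<theta>bar k / 2 ^ i))
       \<and> (let \<beta> = \<sigma>m1 / \<tau>m1; nA = opnorm_p np A;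
              \<tau>min = min \<tau>m1 ((- L + sqrt (L\<^sup>2 + 4 * \<delta>\<^sup>2 * \<beta> * nA\<^sup>2)) / (4 * \<beta> * nA\<^sup>2));
              s' = bdcv_run Dp \<phi> g\<phi> f h gh A b \<delta> x0 z0 \<tau>m1 \<sigma>m1 \<theta>bar (Suc k)
          in fst (snd (snd (snd s'))) \<ge> \<tau>min \<and> snd (snd (snd (snd s'))) \<ge> \<beta> * \<tau>min)"
proof -
  interpret bregman_condat_vu Dp \<phi> g\<phi> f h gh np A b L \<delta>
    using np_norm strong prox_ok L_pos L_smooth A_nz \<delta>(1) by unfold_locales simp_all
  have "min \<tau>m1 ((- L + sqrt (L\<^sup>2 + 4 * \<delta>\<^sup>2 * \<beta> * nA\<^sup>2)) / (4 * \<beta> * nA\<^sup>2))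
      = min \<tau>m1 (step_bound \<beta> / 2)" for \<beta>
    unfolding step_bound_def by (simp add: algebra_simps)
  then show ?thesis
    using bdcv_run_step_bounds[OF _ steps \<theta>bar] x0 by (simp add: Let_def)
qed

end
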